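(* Let $\mathbf A$ and $\mathbf B$ be algebras on the same underlying set $A$ such that some ternary operation $q$ is a Mal'cev term operation of both, and let $n\ge1$ and $\alpha_0,\dots,\alpha_{n-1}$ be equivalence relations on $A$ that are congruences of both $\mathbf A$ and $\mathbf B$. Then $[\alpha_i\mid i\in I]_{\mathbf A}=[\alpha_i\mid i\in I]_{\mathbf B}$ for all nonempty $I\subseteq\{0,\dots,n-1\}$ if and only if $\Delta_{\mathbf A}(\alpha_0,\dots,\alpha_{n-1})=\Delta_{\mathbf B}(\alpha_0,\dots,\alpha_{n-1})$.
   Context: A Mal'cev term operation is a ternary term operation $q$ with $q(x,x,y)=y=q(y,x,x)$. $[\cdots]_{\mathbf X}$ denotes the commutator computed in the algebra $\mathbf X$, and $[\alpha_i\mid i\in I]$ means $[\alpha_{i_0},\dots,\alpha_{i_{k-1}}]$ where $I=\{i_0<\dots<i_{k-1}\}$. Higher commutator (Bulatov): in an algebra $\mathbf X$, for congruences $\beta_0,\dots,\beta_{m-1},\gamma$, say $\beta_0,\dots,\beta_{m-2}$ centralize $\beta_{m-1}$ modulo $\gamma$ if for all tuples $\mathbf a_i,\mathbf b_i$ ($i<m$, with $\mathbf a_i\neq\mathbf b_i$ congruent modulo $\beta_i$ coordinatewise) and every term operation $t$ of $\mathbf X$ such that $t(\mathbf x_0,\dots,\mathbf x_{m-2},\mathbf a_{m-1})\equiv_\gamma t(\mathbf x_0,\dots,\mathbf x_{m-2},\mathbf b_{m-1})$ for all $(\mathbf x_0,\dots,\mathbf x_{m-2})\in(\{\mathbf a_0,\mathbf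 b_0\}\times\dots\times\{\mathbf a_{m-2},\mathbf b_{m-2}\})\setminus\{(\mathbf b_0,\dots,\mathbf b_{m-2})\}$, we have $t(\mathbf b_0,\dots,\mathbf b_{m-2},\mathbf a_{m-1})\equiv_\gamma t(\mathbf b_0,\dots,\mathbf b_{m-2},\mathbf b_{m-1})$. $[\beta_0,\dots,\beta_{m-1}]_{\mathbf X}$ is the smallest such $\gamma$. For $k\ge0$, $k_{(i)}$ is the $i$-th binary digit of $k$ (least significant is $i=0$). For $a,b\in A$ and $i<n$, $\mathbf c_i^n(a,b)\in A^{2^n}$ has $k$-th coordinate $a$ if $k_{(i)}=0$ and $b$ if $k_{(i)}=1$. $\Delta_{\mathbf X}(\alpha_0,\dots,\alpha_{n-1})$ is the subuniverse of $\mathbf X^{2^n}$ generated by $\{\mathbf c_i^n(a,b): i<n,\ (a,b)\in\alpha_i\}$. *)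

theory Defs
  imports Main
begin

text \<open>An algebra is given by its underlying set A and a set F of fundamental
operations; each operation is a pair (n, f) with arity n, where f is applied to
argument lists of length n.\<close>

type_synonym 'a ops = "(nat \<times> ('a list \<Rightarrow> 'a)) set"

definition is_algebra :: "'a set \<Rightarrow> 'a ops \<Rightarrow> bool" where
  "is_algebra A F \<longleftrightarrow> A \<noteq> {} \<and>
     (\<forall>(n, f) \<in> F. \<forall>xs. length xs = n \<and> set xs \<subseteq> A \<longrightarrow> f xs \<in> A)"

inductive_set termops :: "'a ops \<Rightarrow> nat \<Rightarrow> ('a list \<Rightarrow> 'a) set"
  for F :: "'a ops" and k :: nat where
  proj: "i < k \<Longrightarrow> (\<lambda>xs. xs ! i) \<in> termops F k"
| comp: "(n, f) \<in> F \<Longrightarrow> length gs = n \<Longrightarrow> (\<forall>g \<in> set gs. g \<in> termops F k)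
          \<Longrightarrow> (\<lambda>xs. f (map (\<lambda>g. g xs) gs)) \<in> termops F k"

definition is_term_op :: "'a set \<Rightarrow> 'a ops \<Rightarrow> nat \<Rightarrow> ('a list \<Rightarrow> 'a) \<Rightarrow> bool" where
  "is_term_op A F k q \<longleftrightarrow>
     (\<exists>t \<in> termops F k. \<forall>xs. length xs = k \<and> set xs \<subseteq> A \<longrightarrow> t xs = q xs)"

definition is_malcev :: "'a set \<Rightarrow> 'a ops \<Rightarrow> ('a list \<Rightarrow> 'a) \<Rightarrow> bool" where
  "is_malcev A F q \<longleftrightarrow> is_term_op A F 3 q \<and>
     (\<forall>x \<in> A. \<forall>y \<in> A. q [x, x, y] = y \<and> q [y, x, x] = y)"

definition congruence :: "'a set \<Rightarrow> 'a ops \<Rightarrow> ('a \<times> 'a) set \<Rightarrow> bool" where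
  "congruence A F \<alpha> \<longleftrightarrow> equiv A \<alpha> \<and>
     (\<forall>(n, f) \<in> F. \<forall>xs ys. length xs = n \<and> length ys = n \<and>
        list_all2 (\<lambda>x y. (x, y) \<in> \<alpha>) xs ys \<longrightarrow> (f xs, f ys) \<in> \<alpha>)"

text \<open>Bulatov's centrality condition: \<beta>_0,...,\<beta>_{m-2} centralize \<beta>_{m-1} modulo \<gamma>,
where \<beta>s = [\<beta>_0,...,\<beta>_{m-1}]. The tuples a_i, b_i are the lists as!i, bs!i;
the term operation t takes the concatenation of its m argument tuples.\<close>

definition pick :: "nat \<Rightarrow> (nat \<Rightarrow> bool) \<Rightarrow> 'a list list \<Rightarrow> 'a list list \<Rightarrow> 'a list list" where
  "pick l e as bs = map (\<lambda>i. if e i then bs ! i else as ! i) [0..<l]"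

definition centralizes :: "'a set \<Rightarrow> 'a ops \<Rightarrow> ('a \<times> 'a) set list \<Rightarrow> ('a \<times> 'a) set \<Rightarrow> bool" where
  "centralizes A F \<beta>s \<gamma> \<longleftrightarrow>
     (\<forall>as bs t. length as = length \<beta>s \<and> length bs = length \<beta>s \<and>
        (\<forall>i < length \<beta>s. length (as ! i) = length (bs ! i) \<and> as ! i \<noteq> bs ! i \<and>
            list_all2 (\<lambda>x y. (x, y) \<in> \<beta>s ! i) (as ! i) (bs ! i)) \<and>
        t \<in> termops F (length (concat as)) \<and>
        (\<forall>e. (\<exists>i < length \<beta>s - 1. \<not> e i) \<longrightarrow>
            (t (concat (pick (length \<beta>s - 1) e as bs @ [as ! (length \<beta>s - 1)])),
             t (concat (pick (length \<beta>s - 1) e as bs @ [bs ! (length \<beta>s - 1)]))) \<in> \<gamma>)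
      \<longrightarrow> (t (concat (take (length \<beta>s - 1) bs @ [as ! (length \<beta>s - 1)])),
           t (concat bs)) \<in> \<gamma>)"

definition commutator :: "'a set \<Rightarrow> 'a ops \<Rightarrow> ('a \<times> 'a) set list \<Rightarrow> ('a \<times> 'a) set" where
  "commutator A F \<beta>s = \<Inter> {\<gamma>. congruence A F \<gamma> \<and> centralizes A F \<beta>s \<gamma>}"

definition commutator_idx :: "'a set \<Rightarrow> 'a ops \<Rightarrow> (nat \<Rightarrow> ('a \<times> 'a) set) \<Rightarrow> nat set \<Rightarrow> ('a \<times> 'a) set" where
  "commutator_idx A F \<alpha> I = commutator A F (map \<alpha> (sorted_list_of_set I))"

text \<open>Elements of A^(2^n) are lists of length 2^n; c_i^n(a,b).\<close>
definition cvec :: "nat \<Rightarrow> nat \<Rightarrow> 'a \<Rightarrow> 'a \<Rightarrow> 'a list" where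
  "cvec n i a b = map (\<lambda>k. if (k div 2 ^ i) mod 2 = 0 then a else b) [0..<2 ^ n]"

text \<open>\<Delta>(\<alpha>_0,...,\<alpha>_{n-1}): the subuniverse of the power algebra X^(2^n) generated by the
c_i^n(a,b) (operations act coordinatewise).\<close>
inductive_set Delta :: "'a set \<Rightarrow> 'a ops \<Rightarrow> nat \<Rightarrow> (nat \<Rightarrow> ('a \<times> 'a) set) \<Rightarrow> 'a list set"
  for A :: "'a set" and F :: "'a ops" and n :: nat and \<alpha> :: "nat \<Rightarrow> ('a \<times> 'a) set" where
  gen: "i < n \<Longrightarrow> (a, b) \<in> \<alpha> i \<Longrightarrow> cvec n i a b \<in> Delta A F n \<alpha>"
| op: "(k, f) \<in> F \<Longrightarrow> length vs = k \<Longrightarrow> (\<forall>v \<in> set vs. v \<in> Delta A F n \<alpha>)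
        \<Longrightarrow> map (\<lambda>j. f (map (\<lambda>v. v ! j) vs)) [0..<2 ^ n] \<in> Delta A F n \<alpha>"

end

theory Submission
  imports Defs
begin

text \<open>For nonempty \<open>I\<close>, the commutator \<open>[\<alpha>\<^sub>i | i \<in> I]\<close> consists exactly of the pairs \<open>(c, d)\<close>
  for which the vector that is \<open>d\<close> at the coordinates \<open>k\<close> having all bits of \<open>I\<close> set and \<open>c\<close>
  elsewhere lies in \<open>\<Delta>(\<alpha>\<^sub>0,\<dots>,\<alpha>\<^sub>n\<^sub>-\<^sub>1)\<close>; by reindexing it suffices to treat \<open>I = {0,\<dots>,n-1}\<close>.
  These pairs form a congruence (closure of \<open>\<Delta>\<close> under \<open>q\<close>), which contains every congruence
  satisfying the centrality condition, because every element of \<open>\<Delta>\<close> is the cube of values of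
  a term, and which satisfies it: the Mal'cev term sweeps the bottom face of such a cube to a
  constant and then clears the top face coordinate by coordinate.

  Conversely \<open>\<Delta>\<close> is determined by these face vectors. An element \<open>u \<in> \<Delta>\<^sub>A\<close> is rebuilt inside
  \<open>\<Delta>\<^sub>A \<inter> \<Delta>\<^sub>B\<close> one coordinate at a time: if \<open>w\<close> agrees with \<open>u\<close> below \<open>N\<close>, then \<open>q\<close> applied
  to \<open>u\<close> and \<open>w\<close> restricted to the bits of \<open>N\<close> yields a face vector, which lies in \<open>\<Delta>\<^sub>B\<close> as
  well and corrects coordinate \<open>N\<close> of \<open>w\<close>.\<close>

unbundle bit_operations_syntax

section \<open>Binary encoding of cube vertices\<close>

definition nat_of_bits :: "nat \<Rightarrow> (nat \<Rightarrow> bool) \<Rightarrow> nat" where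
  "nat_of_bits n P = horner_sum of_bool 2 (map P [0..<n])"

lemma nat_of_bits_less: "nat_of_bits n P < 2 ^ n"
  using horner_sum_bound[of "map P [0..<n]"] by (simp add: nat_of_bits_def)

lemma bit_nat_of_bits [simp]: "bit (nat_of_bits n P) i \<longleftrightarrow> i < n \<and> P i"
  by (auto simp: nat_of_bits_def bit_horner_sum_bit_iff)

lemma bit_less_exp_imp_less: "(k::nat) < 2 ^ n \<Longrightarrow> bit k i \<Longrightarrow> i < n"
  by (metis bit_take_bit_iff take_bit_nat_eq_self_iff)

lemma less_exp_if_bits_below: "(\<And>i. bit k i \<Longrightarrow> i < n) \<Longrightarrow> (k::nat) < 2 ^ n"
  by (metis bit_take_bit_iff bit_eq_iff take_bit_nat_less_exp)

lemma eq_nat_of_bits_iff: "(k::nat) < 2 ^ n \<Longrightarrow> k = nat_of_bits n P \<longleftrightarrow> (\<forall>i<n. bit k i = P i)"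
  by (auto simp: bit_eq_iff dest: bit_less_exp_imp_less)

lemma eq_mask_iff: "(k::nat) < 2 ^ n \<Longrightarrow> k = mask n \<longleftrightarrow> (\<forall>i<n. bit k i)"
  by (auto simp: bit_eq_iff bit_mask_iff dest: bit_less_exp_imp_less)

lemma set_bit_less_exp: "i < n \<Longrightarrow> (k::nat) < 2 ^ n \<Longrightarrow> set_bit i k < 2 ^ n"
  by (rule less_exp_if_bits_below) (auto simp: bit_set_bit_iff dest: bit_less_exp_imp_less)

lemma unset_bit_less_exp: "(k::nat) < 2 ^ n \<Longrightarrow> unset_bit i k < 2 ^ n"
  by (rule less_exp_if_bits_below) (auto simp: bit_unset_bit_iff dest: bit_less_exp_imp_less)

lemma set_bit_unset_bit: "bit (k::nat) i \<Longrightarrow> set_bit i (unset_bit i k) = k"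
  by (rule bit_eqI) (auto simp: bit_set_bit_iff bit_unset_bit_iff)

lemma unset_bit_mask_Suc: "unset_bit n (mask (Suc n)) = (mask n :: nat)"
  by (rule bit_eqI) (auto simp: bit_unset_bit_iff bit_mask_iff)

lemma set_bit_mask: "set_bit n (mask n) = (mask (Suc n) :: nat)"
  by (rule bit_eqI) (auto simp: bit_set_bit_iff bit_mask_iff)

lemma le_if_bits_subset: "(k::nat) < 2 ^ n \<Longrightarrow> \<forall>i<n. bit k i \<longrightarrow> bit j i \<Longrightarrow> k \<le> j"
proof -
  assume "k < 2 ^ n" "\<forall>i<n. bit k i \<longrightarrow> bit j i"
  then have "k AND j = k" by (auto simp: bit_eq_iff bit_and_iff dest: bit_less_exp_imp_less)
  moreover have "int k AND int j \<le> int j" by simp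
  ultimately show "k \<le> j" by (metis and_nat_def nat_int nat_mono)
qed

lemma ex_bit_if_nonzero: "(k::nat) < 2 ^ n \<Longrightarrow> k \<noteq> 0 \<Longrightarrow> \<exists>i<n. bit k i"
  by (auto simp: bit_eq_iff dest: bit_less_exp_imp_less)

section \<open>Term operations and the subuniverse \<open>\<Delta>\<close>\<close>

lemma termops_closed:
  assumes "is_algebra A F"
  shows "t \<in> termops F k \<Longrightarrow> length xs = k \<Longrightarrow> set xs \<subseteq> A \<Longrightarrow> t xs \<in> A"
proof (induction t rule: termops.induct)
  case (comp n f gs)
  then have "set (map (\<lambda>g. g xs) gs) \<subseteq> A" by auto
  with assms comp.hyps show ?case unfolding is_algebra_def by fastforce
qed auto

lemma termops_compatible:
  assumes "congruence A F \<gamma>"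
  shows "t \<in> termops F k \<Longrightarrow> length xs = k \<Longrightarrow> list_all2 (\<lambda>x y. (x, y) \<in> \<gamma>) xs ys
    \<Longrightarrow> (t xs, t ys) \<in> \<gamma>"
proof (induction t rule: termops.induct)
  case (proj i)
  then show ?case by (auto dest: list_all2_nthD)
next
  case (comp n f gs)
  then have "list_all2 (\<lambda>x y. (x, y) \<in> \<gamma>) (map (\<lambda>g. g xs) gs) (map (\<lambda>g. g ys) gs)"
    by (auto simp: list_all2_conv_all_nth)
  with assms comp.hyps show ?case unfolding congruence_def by fastforce
qed

lemma termops_subst:
  "g \<in> termops F k' \<Longrightarrow> \<forall>p<k'. h p \<in> termops F k
    \<Longrightarrow> (\<lambda>xs. g (map (\<lambda>p. h p xs) [0..<k'])) \<in> termops F k"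
proof (induction g rule: termops.induct)
  case (proj i)
  then show ?case by simp
next
  case (comp n f gs)
  then have "(\<lambda>xs. f (map (\<lambda>g. g xs) (map (\<lambda>g xs. g (map (\<lambda>p. h p xs) [0..<k'])) gs)))
      \<in> termops F k"
    by (intro termops.comp) auto
  then show ?case by (simp add: comp_def)
qed

lemma congruence_subset: "congruence A F \<gamma> \<Longrightarrow> \<gamma> \<subseteq> A \<times> A"
  unfolding congruence_def equiv_def refl_on_def by blast

lemma congruence_refl: "congruence A F \<gamma> \<Longrightarrow> a \<in> A \<Longrightarrow> (a, a) \<in> \<gamma>"
  unfolding congruence_def equiv_def refl_on_def by blast

lemma term_op_compatible:
  assumes "congruence A F \<gamma>" and "is_term_op A F 3 q"
    and "(x1, y1) \<in> \<gamma>" "(x2, y2) \<in> \<gamma>" "(x3, y3) \<in> \<gamma>"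
  shows "(q [x1, x2, x3], q [y1, y2, y3]) \<in> \<gamma>"
proof -
  obtain t where t: "t \<in> termops F 3" "\<forall>xs. length xs = 3 \<and> set xs \<subseteq> A \<longrightarrow> t xs = q xs"
    using assms(2) unfolding is_term_op_def by blast
  have "(t [x1, x2, x3], t [y1, y2, y3]) \<in> \<gamma>"
    using termops_compatible[OF assms(1) t(1)] assms(3-5) by simp
  moreover have "{x1, x2, x3, y1, y2, y3} \<subseteq> A"
    using congruence_subset[OF assms(1)] assms(3-5) by auto
  ultimately show ?thesis using t(2) by simp
qed

lemma length_Delta: "v \<in> Delta A F n \<alpha> \<Longrightarrow> length v = 2 ^ n"
  by (induction rule: Delta.induct) (auto simp: cvec_def)

lemma nth_cvec: "k < 2 ^ n \<Longrightarrow> cvec n i a b ! k = (if bit k i then b else a)"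
  by (simp add: cvec_def bit_iff_odd even_iff_mod_2_eq_zero)

lemma length_cvec [simp]: "length (cvec n i a b) = 2 ^ n"
  by (simp add: cvec_def)

lemma Delta_nth_closed:
  assumes "is_algebra A F" and "\<forall>i<n. \<alpha> i \<subseteq> A \<times> A"
  shows "v \<in> Delta A F n \<alpha> \<Longrightarrow> k < 2 ^ n \<Longrightarrow> v ! k \<in> A"
proof (induction arbitrary: k rule: Delta.induct)
  case (gen i a b)
  then show ?case using assms(2) by (auto simp: nth_cvec)
next
  case (op f_arity f vs)
  then have "set (map (\<lambda>v. v ! k) vs) \<subseteq> A" by auto
  with assms(1) op show ?case unfolding is_algebra_def by fastforce
qed

lemma Delta_termops_closed:
  "t \<in> termops F k \<Longrightarrow> length vs = k \<Longrightarrow> \<forall>v\<in>set vs. v \<in> Delta A F n \<alpha>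
    \<Longrightarrow> map (\<lambda>j. t (map (\<lambda>v. v ! j) vs)) [0..<2 ^ n] \<in> Delta A F n \<alpha>"
proof (induction t rule: termops.induct)
  case (proj i)
  then have "vs ! i \<in> Delta A F n \<alpha>" by auto
  moreover have "map (\<lambda>j. map (\<lambda>v. v ! j) vs ! i) [0..<2 ^ n] = vs ! i"
    using proj length_Delta[OF calculation] by (intro nth_equalityI) auto
  ultimately show ?case by simp
next
  case (comp l f gs)
  let ?ws = "map (\<lambda>g. map (\<lambda>j. g (map (\<lambda>v. v ! j) vs)) [0..<2 ^ n]) gs"
  have "map (\<lambda>j. f (map (\<lambda>w. w ! j) ?ws)) [0..<2 ^ n] \<in> Delta A F n \<alpha>"
    using comp by (intro Delta.op[of l f]) auto
  moreover have "map (\<lambda>j. f (map (\<lambda>w. w ! j) ?ws)) [0..<2 ^ n]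
      = map (\<lambda>j. f (map (\<lambda>g. g (map (\<lambda>v. v ! j) vs)) gs)) [0..<2 ^ n]"
    by (auto simp: comp_def intro!: map_cong)
  ultimately show ?case by metis
qed

lemma Delta_term_op_closed:
  assumes "is_algebra A F" and "\<forall>i<n. \<alpha> i \<subseteq> A \<times> A" and "is_term_op A F 3 q"
    and "u \<in> Delta A F n \<alpha>" "v \<in> Delta A F n \<alpha>" "w \<in> Delta A F n \<alpha>"
  shows "map (\<lambda>j. q [u ! j, v ! j, w ! j]) [0..<2 ^ n] \<in> Delta A F n \<alpha>"
proof -
  obtain t where t: "t \<in> termops F 3" "\<forall>xs. length xs = 3 \<and> set xs \<subseteq> A \<longrightarrow> t xs = q xs"
    using assms(3) unfolding is_term_op_def by blast
  have "map (\<lambda>j. t (map (\<lambda>v. v ! j) [u, v, w])) [0..<2 ^ n] \<in> Delta A F n \<alpha>"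
    using Delta_termops_closed[OF t(1), of "[u, v, w]"] assms(4-6) by simp
  moreover have "map (\<lambda>j. t (map (\<lambda>v. v ! j) [u, v, w])) [0..<2 ^ n]
      = map (\<lambda>j. q [u ! j, v ! j, w ! j]) [0..<2 ^ n]"
    using t(2) Delta_nth_closed[OF assms(1,2)] assms(4-6) by (intro map_cong) auto
  ultimately show ?thesis by metis
qed

lemma Delta_replicate:
  assumes "0 < n" and "(a, a) \<in> \<alpha> 0"
  shows "replicate (2 ^ n) a \<in> Delta A F n \<alpha>"
  using Delta.gen[of 0 n a a \<alpha> A F] assms by (simp add: cvec_def map_replicate_const)

text \<open>Indices \<open>k < 2\<^sup>n\<close> stand for the vertices of the cube \<open>{0,1}\<^sup>n\<close> via their binary digits,
  so \<open>\<rho>\<close> is a map between cubes.\<close>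

lemma Delta_reindex:
  assumes \<rho>: "\<And>k. k < 2 ^ n' \<Longrightarrow> \<rho> k < 2 ^ n"
    and bits: "\<And>i. i < n \<Longrightarrow> (\<exists>j<n'. \<alpha> i \<subseteq> \<beta> j \<and> (\<forall>k<2 ^ n'. bit (\<rho> k) i = bit k j))
      \<or> (\<exists>b. \<forall>k<2 ^ n'. bit (\<rho> k) i = b)"
    and \<alpha>: "\<forall>i<n. \<alpha> i \<subseteq> A \<times> A" and "0 < n'" and \<beta>: "\<And>a. a \<in> A \<Longrightarrow> (a, a) \<in> \<beta> 0"
  shows "v \<in> Delta A F n \<alpha> \<Longrightarrow> map (\<lambda>k. v ! \<rho> k) [0..<2 ^ n'] \<in> Delta A F n' \<beta>"
proof (induction rule: Delta.induct)
  case (gen i a b)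
  from bits[OF gen(1)] show ?case
  proof (elim disjE exE conjE)
    fix j assume "j < n'" "\<alpha> i \<subseteq> \<beta> j" "\<forall>k<2 ^ n'. bit (\<rho> k) i = bit k j"
    moreover from this have "map (\<lambda>k. cvec n i a b ! \<rho> k) [0..<2 ^ n'] = cvec n' j a b"
      using \<rho> by (intro nth_equalityI) (auto simp: nth_cvec)
    ultimately show ?thesis using Delta.gen gen(2) by (metis subsetD)
  next
    fix c assume "\<forall>k<2 ^ n'. bit (\<rho> k) i = c"
    then have "map (\<lambda>k. cvec n i a b ! \<rho> k) [0..<2 ^ n'] = replicate (2 ^ n') (if c then b else a)"
      using \<rho> by (intro nth_equalityI) (auto simp: nth_cvec)
    moreover have "a \<in> A" "b \<in> A" using \<alpha> gen by auto
    ultimately show ?thesis using Delta_replicate[OF \<open>0 < n'\<close>, of _ \<beta> A F] \<beta> by (cases c) auto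
  qed
next
  case (op l f vs)
  let ?ws = "map (\<lambda>v. map (\<lambda>k. v ! \<rho> k) [0..<2 ^ n']) vs"
  have "map (\<lambda>j. f (map (\<lambda>w. w ! j) ?ws)) [0..<2 ^ n'] \<in> Delta A F n' \<beta>"
    using op by (intro Delta.op[of l f]) auto
  moreover have "map (\<lambda>j. f (map (\<lambda>w. w ! j) ?ws)) [0..<2 ^ n']
      = map (\<lambda>k. map (\<lambda>j. f (map (\<lambda>v. v ! j) vs)) [0..<2 ^ n] ! \<rho> k) [0..<2 ^ n']"
    using \<rho> by (auto simp: comp_def intro!: map_cong)
  ultimately show ?case by metis
qed

section \<open>Elements of \<open>\<Delta>\<close> as values of terms\<close>

definition gens_in :: "nat \<Rightarrow> (nat \<Rightarrow> ('a \<times> 'a) set) \<Rightarrow> (nat \<times> 'a \<times> 'a) list \<Rightarrow> bool" where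
  "gens_in n \<alpha> gs \<longleftrightarrow> (\<forall>(i, a, b) \<in> set gs. i < n \<and> (a, b) \<in> \<alpha> i)"

text \<open>The value of a term at the generators \<open>c\<^sub>i\<^sup>n(a,b)\<close> listed in \<open>gs\<close> as triples \<open>(i, a, b)\<close>.\<close>
definition gen_eval :: "nat \<Rightarrow> (nat \<times> 'a \<times> 'a) list \<Rightarrow> ('a list \<Rightarrow> 'a) \<Rightarrow> 'a list" where
  "gen_eval n gs t = map (\<lambda>k. t (map (\<lambda>(i, a, b). if bit k i then b else a) gs)) [0..<2 ^ n]"

lemma gen_eval_common_gens:
  assumes "\<forall>v\<in>set vs. \<exists>gs t. gens_in n \<alpha> gs \<and> t \<in> termops F (length gs) \<and> v = gen_eval n gs t"
  shows "\<exists>gs ts. gens_in n \<alpha> gs \<and>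
    list_all2 (\<lambda>v t. t \<in> termops F (length gs) \<and> v = gen_eval n gs t) vs ts"
  using assms
proof (induction vs)
  case Nil
  have "gens_in n \<alpha> []" by (simp add: gens_in_def)
  then show ?case by blast
next
  case (Cons v vs)
  obtain gs1 t1 where 1: "gens_in n \<alpha> gs1" "t1 \<in> termops F (length gs1)" "v = gen_eval n gs1 t1"
    using Cons.prems by auto
  obtain gs2 ts2 where 2: "gens_in n \<alpha> gs2"
    "list_all2 (\<lambda>v t. t \<in> termops F (length gs2) \<and> v = gen_eval n gs2 t) vs ts2"
    using Cons by auto
  let ?L1 = "length gs1" and ?L2 = "length gs2"
  define t1' where "t1' = (\<lambda>xs. t1 (map (\<lambda>p. xs ! p) [0..<?L1]))"
  define shift where "shift t = (\<lambda>xs. t (map (\<lambda>p. xs ! (?L1 + p)) [0..<?L2]))" for t :: "'a list \<Rightarrow> 'a"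
  have "t1' \<in> termops F (length (gs1 @ gs2))"
    unfolding t1'_def using 1(2) by (intro termops_subst) (auto intro: termops.proj)
  moreover have "gen_eval n (gs1 @ gs2) t1' = v"
    unfolding 1(3) gen_eval_def t1'_def
    by (intro map_cong[OF refl] arg_cong[of _ _ t1] nth_equalityI) (auto simp: nth_append)
  moreover have "shift t \<in> termops F (length (gs1 @ gs2))" if "t \<in> termops F ?L2" for t
    unfolding shift_def using that by (intro termops_subst) (auto intro: termops.proj)
  moreover have "gen_eval n (gs1 @ gs2) (shift t) = gen_eval n gs2 t" for t
    unfolding gen_eval_def shift_def
    by (intro map_cong[OF refl] arg_cong[of _ _ t] nth_equalityI) (auto simp: nth_append)
  ultimately have "list_all2 (\<lambda>v t. t \<in> termops F (length (gs1 @ gs2)) \<and> v = gen_eval n (gs1 @ gs2) t)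
      (v # vs) (t1' # map shift ts2)"
    using 2(2) by (auto simp: list_all2_map2 elim!: list_all2_mono)
  moreover have "gens_in n \<alpha> (gs1 @ gs2)" using 1(1) 2(1) by (auto simp: gens_in_def)
  ultimately show ?case by blast
qed

lemma Delta_obtain_gen_eval:
  "v \<in> Delta A F n \<alpha> \<Longrightarrow> \<exists>gs t. gens_in n \<alpha> gs \<and> t \<in> termops F (length gs) \<and> v = gen_eval n gs t"
proof (induction rule: Delta.induct)
  case (gen i a b)
  have "cvec n i a b = gen_eval n [(i, a, b)] (\<lambda>xs. xs ! 0)"
    by (intro nth_equalityI) (auto simp: gen_eval_def nth_cvec)
  moreover have "(\<lambda>xs. xs ! 0) \<in> termops F (length [(i, a, b)])" by (simp add: termops.proj)
  moreover have "gens_in n \<alpha> [(i, a, b)]" using gen by (simp add: gens_in_def)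
  ultimately show ?case by blast
next
  case (op l f vs)
  then obtain gs ts where gs: "gens_in n \<alpha> gs"
    and ts: "list_all2 (\<lambda>v t. t \<in> termops F (length gs) \<and> v = gen_eval n gs t) vs ts"
    using gen_eval_common_gens[of vs n \<alpha> F] by blast
  define t where "t = (\<lambda>xs. f (map (\<lambda>g. g xs) ts))"
  have "t \<in> termops F (length gs)"
    unfolding t_def using op ts by (intro termops.comp) (auto simp: list_all2_conv_all_nth in_set_conv_nth)
  moreover have "map (\<lambda>j. f (map (\<lambda>v. v ! j) vs)) [0..<2 ^ n] = gen_eval n gs t"
    using ts unfolding gen_eval_def t_def
    by (auto simp: list_all2_conv_all_nth gen_eval_def intro!: map_cong arg_cong[of _ _ f] nth_equalityI)
  ultimately show ?case using gs by blast
qed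

lemma length_pick [simp]: "length (pick l e as bs) = l"
  by (simp add: pick_def)

lemma nth_pick: "i < l \<Longrightarrow> pick l e as bs ! i = (if e i then bs ! i else as ! i)"
  by (simp add: pick_def)

lemma pick_cong: "(\<And>i. i < l \<Longrightarrow> e i = e' i) \<Longrightarrow> pick l e as bs = pick l e' as bs"
  by (simp add: pick_def)

lemma pick_Suc: "pick (Suc l) e as bs = pick l e as bs @ [if e l then bs ! l else as ! l]"
  by (simp add: pick_def)

lemma pick_Suc_fun_upd:
  "pick (Suc l) (e(l := b)) as bs = pick l e as bs @ [if b then bs ! l else as ! l]"
  by (simp add: pick_Suc cong: pick_cong)

lemma pick_take: "l \<le> length bs \<Longrightarrow> (\<And>i. i < l \<Longrightarrow> e i) \<Longrightarrow> pick l e as bs = take l bs"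
  by (intro nth_equalityI) (simp_all add: nth_pick)

lemma pick_True: "length bs = l \<Longrightarrow> pick l (\<lambda>_. True) as bs = bs"
  by (intro nth_equalityI) (simp_all add: nth_pick)

lemma nth_concat_equal_length:
  "\<forall>xs\<in>set xss. length xs = k \<Longrightarrow> i < length xss \<Longrightarrow> l < k \<Longrightarrow> concat xss ! (i * k + l) = xss ! i ! l"
proof (induction xss arbitrary: i)
  case (Cons xs xss)
  then show ?case by (cases i) (auto simp: nth_append add.assoc)
qed simp

definition related_tuples ::
    "nat \<Rightarrow> (nat \<Rightarrow> ('a \<times> 'a) set) \<Rightarrow> 'a list list \<Rightarrow> 'a list list \<Rightarrow> bool" where
  "related_tuples m \<beta> as bs \<longleftrightarrow> length as = m \<and> length bs = m \<and>
     (\<forall>i<m. list_all2 (\<lambda>x y. (x, y) \<in> \<beta> i) (as ! i) (bs ! i))"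

definition cube_eval :: "nat \<Rightarrow> ('a list \<Rightarrow> 'a) \<Rightarrow> 'a list list \<Rightarrow> 'a list list \<Rightarrow> 'a list" where
  "cube_eval m t as bs = map (\<lambda>k. t (concat (pick m (bit k) as bs))) [0..<2 ^ m]"

lemma nth_cube_eval: "k < 2 ^ m \<Longrightarrow> cube_eval m t as bs ! k = t (concat (pick m (bit k) as bs))"
  by (simp add: cube_eval_def)

lemma nth_cube_eval_nat_of_bits:
  "cube_eval m t as bs ! nat_of_bits m P = t (concat (pick m P as bs))"
  using nat_of_bits_less[of m P] by (simp add: cube_eval_def cong: pick_cong)

lemma cube_eval_in_Delta:
  assumes rel: "related_tuples m \<beta> as bs" and t: "t \<in> termops F (length (concat as))"
  shows "cube_eval m t as bs \<in> Delta A F m \<beta>"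
proof -
  define vs where "vs = concat (map (\<lambda>i. map (\<lambda>l. cvec m i (as ! i ! l) (bs ! i ! l))
      [0..<length (as ! i)]) [0..<m])"
  have "map length as = map (\<lambda>i. length (as ! i)) [0..<m]"
    using rel by (intro nth_equalityI) (auto simp: related_tuples_def)
  then have "length vs = length (concat as)" by (simp add: vs_def length_concat comp_def)
  moreover have "\<forall>v\<in>set vs. v \<in> Delta A F m \<beta>"
    using rel by (auto simp: vs_def related_tuples_def list_all2_conv_all_nth intro!: Delta.gen)
  ultimately have "map (\<lambda>k. t (map (\<lambda>v. v ! k) vs)) [0..<2 ^ m] \<in> Delta A F m \<beta>"
    using t by (intro Delta_termops_closed) auto
  moreover have "map (\<lambda>v. v ! k) vs = concat (pick m (bit k) as bs)" if "k < 2 ^ m" for k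
    unfolding vs_def pick_def map_concat using rel that
    by (intro arg_cong[of _ _ concat] map_cong[OF refl] nth_equalityI)
      (auto simp: nth_cvec related_tuples_def list_all2_lengthD)
  then have "map (\<lambda>k. t (map (\<lambda>v. v ! k) vs)) [0..<2 ^ m] = cube_eval m t as bs"
    unfolding cube_eval_def by (intro map_cong) auto
  ultimately show ?thesis by simp
qed

lemma Delta_obtain_cube_eval:
  assumes "v \<in> Delta A F m \<beta>" and cong: "\<forall>i<m. congruence A F (\<beta> i)"
  shows "\<exists>as bs t. related_tuples m \<beta> as bs \<and> t \<in> termops F (length (concat as))
    \<and> v = cube_eval m t as bs"
proof -
  obtain gs t where gs: "gens_in m \<beta> gs" and t: "t \<in> termops F (length gs)"
    and v: "v = gen_eval m gs t"
    using Delta_obtain_gen_eval[OF assms(1)] by blast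
  define K where "K = length gs"
  define dir where "dir l = fst (gs ! l)" for l
  define a where "a l = fst (snd (gs ! l))" for l
  define b where "b l = snd (snd (gs ! l))" for l
  have gs_nth: "gs ! l = (dir l, a l, b l)" for l by (simp add: dir_def a_def b_def)
  have dir: "dir l < m" and ab: "(a l, b l) \<in> \<beta> (dir l)" if "l < K" for l
  proof -
    have "(dir l, a l, b l) \<in> set gs" using that nth_mem[of l gs] by (simp add: K_def gs_nth)
    with gs show "dir l < m" "(a l, b l) \<in> \<beta> (dir l)" unfolding gens_in_def by fastforce+
  qed
  text \<open>The \<open>i\<close>-th argument tuple lists all generator entries, switching to \<open>b\<close> exactly
    at the generators of direction \<open>i\<close>; the new term reads entry \<open>l\<close> from block \<open>dir l\<close>.\<close>
  define as where "as = replicate m (map a [0..<K])"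
  define bs where "bs = map (\<lambda>i. map (\<lambda>l. if dir l = i then b l else a l) [0..<K]) [0..<m]"
  define t' where "t' = (\<lambda>xs. t (map (\<lambda>l. xs ! (dir l * K + l)) [0..<K]))"
  have "related_tuples m \<beta> as bs"
    unfolding related_tuples_def list_all2_conv_all_nth
  proof (intro conjI allI impI)
    fix i l assume i: "i < m" and "l < length (as ! i)"
    then have l: "l < K" by (simp add: as_def)
    then have "a l \<in> A"
      using congruence_subset[of A F "\<beta> (dir l)"] cong dir ab by blast
    then have "(a l, a l) \<in> \<beta> i" using congruence_refl[of A F "\<beta> i"] cong i by blast
    then show "(as ! i ! l, bs ! i ! l) \<in> \<beta> i"
      using i l ab[OF l] by (auto simp: as_def bs_def)
  qed (simp_all add: as_def bs_def)
  moreover have "t' \<in> termops F (length (concat as))"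
  proof -
    have "dir l * K + l < m * K" if "l < K" for l
    proof -
      have "dir l * K + l < Suc (dir l) * K" using that by simp
      also have "\<dots> \<le> m * K" using dir[OF that] by (intro mult_le_mono1) simp
      finally show ?thesis .
    qed
    then show ?thesis
      unfolding t'_def using t
      by (intro termops_subst) (auto simp: K_def as_def length_concat sum_list_replicate intro: termops.proj)
  qed
  moreover have "v = cube_eval m t' as bs"
  proof (intro nth_equalityI)
    fix k assume "k < length v"
    then have k: "k < 2 ^ m" by (simp add: v gen_eval_def)
    have "concat (pick m (bit k) as bs) ! (dir l * K + l) = (if bit k (dir l) then b l else a l)"
      if "l < K" for l
      using that dir[OF that] by (subst nth_concat_equal_length) (auto simp: as_def bs_def pick_def)
    then have "map (\<lambda>l. concat (pick m (bit k) as bs) ! (dir l * K + l)) [0..<K]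
        = map (\<lambda>(i, a, b). if bit k i then b else a) gs"
      by (intro nth_equalityI) (auto simp: K_def gs_nth)
    then show "v ! k = cube_eval m t' as bs ! k"
      using k by (simp add: v gen_eval_def cube_eval_def t'_def)
  qed (simp add: v gen_eval_def cube_eval_def)
  ultimately show ?thesis by blast
qed

section \<open>The commutator as a relation read off \<open>\<Delta>\<close>\<close>

text \<open>The requirement \<open>a\<^sub>i \<noteq> b\<^sub>i\<close> in the definition of centrality can be dropped.\<close>

lemma centralizesD:
  assumes alg: "is_algebra A F" and eqv: "equiv A \<gamma>" and C: "centralizes A F \<beta>s \<gamma>"
    and \<beta>s: "\<forall>i<length \<beta>s. \<beta>s ! i \<subseteq> A \<times> A"
    and la: "length as = length \<beta>s" and lb: "length bs = length \<beta>s"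
    and rel: "\<forall>i<length \<beta>s. length (as ! i) = length (bs ! i) \<and>
               list_all2 (\<lambda>x y. (x, y) \<in> \<beta>s ! i) (as ! i) (bs ! i)"
    and t: "t \<in> termops F (length (concat as))"
    and H: "\<forall>e. (\<exists>i < length \<beta>s - 1. \<not> e i) \<longrightarrow>
            (t (concat (pick (length \<beta>s - 1) e as bs @ [as ! (length \<beta>s - 1)])),
             t (concat (pick (length \<beta>s - 1) e as bs @ [bs ! (length \<beta>s - 1)]))) \<in> \<gamma>"
  shows "(t (concat (take (length \<beta>s - 1) bs @ [as ! (length \<beta>s - 1)])), t (concat bs)) \<in> \<gamma>"
proof (cases "\<forall>i<length \<beta>s. as ! i \<noteq> bs ! i")
  case True
  then show ?thesis using C la lb rel t H unfolding centralizes_def by blast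
next
  case False
  then obtain i where i: "i < length \<beta>s" "as ! i = bs ! i" by blast
  define l where "l = length \<beta>s - 1"
  have Ll: "length \<beta>s = Suc l" using i by (simp add: l_def)
  have bs: "take l bs @ [bs ! l] = bs" using lb Ll by (metis lessI take_Suc_conv_app_nth take_all order_refl)
  show ?thesis
  proof (cases "i < l")
    case True
    text \<open>An equal pair in a direction other than the last one: choose \<open>e\<close> to pick \<open>a\<^sub>i = b\<^sub>i\<close> there.\<close>
    have "pick l (\<lambda>j. j \<noteq> i) as bs = take l bs"
      using lb Ll i by (intro nth_equalityI) (auto simp: nth_pick)
    moreover have "(t (concat (pick l (\<lambda>j. j \<noteq> i) as bs @ [as ! l])),
        t (concat (pick l (\<lambda>j. j \<noteq> i) as bs @ [bs ! l]))) \<in> \<gamma>"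
      using True by (intro H[folded l_def, rule_format]) auto
    ultimately have "(t (concat (take l bs @ [as ! l])), t (concat (take l bs @ [bs ! l]))) \<in> \<gamma>"
      by (simp only:)
    then show ?thesis unfolding bs by (simp only: l_def)
  next
    case False
    text \<open>Equal pair in the last direction: both sides of the conclusion coincide.\<close>
    then have "i = l" using i Ll by simp
    then have "take l bs @ [as ! l] = bs" using bs i by simp
    moreover have "map length bs = map length as"
      using la lb rel by (intro nth_equalityI) auto
    then have "length (concat bs) = length (concat as)" by (simp add: length_concat)
    moreover have "set (concat bs) \<subseteq> A"
    proof
      fix y assume "y \<in> set (concat bs)"
      then obtain xs where "xs \<in> set bs" "y \<in> set xs" by auto
      then obtain j p where "j < length bs" "p < length (bs ! j)" "y = bs ! j ! p"
        by (auto simp: in_set_conv_nth)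
      then show "y \<in> A" using \<beta>s rel lb by (auto dest: list_all2_nthD2)
    qed
    ultimately have "t (concat bs) \<in> A" using termops_closed[OF alg t] by simp
    then have "(t (concat bs), t (concat bs)) \<in> \<gamma>"
      using eqv unfolding equiv_def refl_on_def by blast
    then show ?thesis using \<open>take l bs @ [as ! l] = bs\<close> by (simp add: l_def)
  qed
qed

definition face_vector :: "nat \<Rightarrow> nat set \<Rightarrow> 'a \<Rightarrow> 'a \<Rightarrow> 'a list" where
  "face_vector n I c d = map (\<lambda>k. if \<forall>i\<in>I. bit k i then d else c) [0..<2 ^ n]"

lemma length_face_vector [simp]: "length (face_vector n I c d) = 2 ^ n"
  by (simp add: face_vector_def)

lemma nth_face_vector: "k < 2 ^ n \<Longrightarrow> face_vector n I c d ! k = (if \<forall>i\<in>I. bit k i then d else c)"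
  by (simp add: face_vector_def)

lemma nth_face_vector_all: "k < 2 ^ n \<Longrightarrow> face_vector n {..<n} c d ! k = (if k = mask n then d else c)"
  by (auto simp: nth_face_vector eq_mask_iff)

locale malcev_cube =
  fixes A :: "'a set" and F :: "'a ops" and q :: "'a list \<Rightarrow> 'a" and m :: nat
    and \<beta> :: "nat \<Rightarrow> ('a \<times> 'a) set"
  assumes alg: "is_algebra A F" and malcev: "is_malcev A F q" and pos: "0 < m"
    and cong: "\<forall>i<m. congruence A F (\<beta> i)"
begin

abbreviation "D \<equiv> Delta A F m \<beta>"

abbreviation corner :: "'a \<Rightarrow> 'a \<Rightarrow> 'a list" where
  "corner c d \<equiv> face_vector m {..<m} c d"

lemma term_op: "is_term_op A F 3 q"
  using malcev by (simp add: is_malcev_def)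

lemma malcev_left: "x \<in> A \<Longrightarrow> y \<in> A \<Longrightarrow> q [x, x, y] = y"
  using malcev by (simp add: is_malcev_def)

lemma malcev_right: "x \<in> A \<Longrightarrow> y \<in> A \<Longrightarrow> q [y, x, x] = y"
  using malcev by (simp add: is_malcev_def)

lemma rel_subset: "\<forall>i<m. \<beta> i \<subseteq> A \<times> A"
  using cong congruence_subset by metis

lemma D_nth_closed: "v \<in> D \<Longrightarrow> k < 2 ^ m \<Longrightarrow> v ! k \<in> A"
  using Delta_nth_closed[OF alg rel_subset] .

lemma D_malcev_closed:
  "u \<in> D \<Longrightarrow> v \<in> D \<Longrightarrow> w \<in> D \<Longrightarrow> map (\<lambda>j. q [u ! j, v ! j, w ! j]) [0..<2 ^ m] \<in> D"
  using Delta_term_op_closed[OF alg rel_subset term_op] .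

lemma rel_refl: "i < m \<Longrightarrow> a \<in> A \<Longrightarrow> (a, a) \<in> \<beta> i"
  using cong congruence_refl by metis

lemma D_replicate: "a \<in> A \<Longrightarrow> replicate (2 ^ m) a \<in> D"
  by (intro Delta_replicate pos rel_refl)

lemma D_reindex:
  assumes "\<And>k. k < 2 ^ m \<Longrightarrow> \<rho> k < 2 ^ m"
    and "\<And>i. i < m \<Longrightarrow> (\<forall>k<2 ^ m. bit (\<rho> k) i = bit k i) \<or> (\<exists>b. \<forall>k<2 ^ m. bit (\<rho> k) i = b)"
    and "v \<in> D"
  shows "map (\<lambda>k. v ! \<rho> k) [0..<2 ^ m] \<in> D"
proof (rule Delta_reindex[of m \<rho> m \<beta> \<beta> A v F, OF assms(1) _ rel_subset pos rel_refl[OF pos] assms(3)])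
  fix i assume i: "i < m"
  from assms(2)[OF i]
  show "(\<exists>j<m. \<beta> i \<subseteq> \<beta> j \<and> (\<forall>k<2 ^ m. bit (\<rho> k) i = bit k j)) \<or> (\<exists>b. \<forall>k<2 ^ m. bit (\<rho> k) i = b)"
  proof
    assume "\<forall>k<2 ^ m. bit (\<rho> k) i = bit k i"
    then show ?thesis using i by (intro disjI1 exI[of _ i]) simp
  qed simp
qed

definition corner_rel :: "('a \<times> 'a) set" where
  "corner_rel = {(c, d). corner c d \<in> D}"

lemma corner_relD: "(c, d) \<in> corner_rel \<Longrightarrow> c \<in> A \<and> d \<in> A"
proof -
  assume "(c, d) \<in> corner_rel"
  then have "corner c d \<in> D" by (simp add: corner_rel_def)
  moreover have "(0::nat) \<noteq> mask m"
    using one_less_power[of "2::nat" m] pos by (simp add: mask_eq_exp_minus_1)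
  ultimately show ?thesis
    using D_nth_closed[of "corner c d" 0] D_nth_closed[of "corner c d" "mask m"]
    by (simp add: nth_face_vector_all mask_nat_less_exp)
qed

lemma corner_rel_refl: "c \<in> A \<Longrightarrow> (c, c) \<in> corner_rel"
proof -
  assume "c \<in> A"
  moreover have "corner c c = replicate (2 ^ m) c"
    by (intro nth_equalityI) (simp_all add: nth_face_vector)
  ultimately show ?thesis using D_replicate by (simp add: corner_rel_def)
qed

lemma corner_rel_sym: "(c, d) \<in> corner_rel \<Longrightarrow> (d, c) \<in> corner_rel"
proof -
  assume cd: "(c, d) \<in> corner_rel"
  then have A: "c \<in> A" "d \<in> A" using corner_relD by auto
  have "map (\<lambda>j. q [replicate (2 ^ m) c ! j, corner c d ! j, replicate (2 ^ m) d ! j]) [0..<2 ^ m] \<in> D"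
    using cd A by (intro D_malcev_closed D_replicate) (auto simp: corner_rel_def)
  moreover have "map (\<lambda>j. q [replicate (2 ^ m) c ! j, corner c d ! j, replicate (2 ^ m) d ! j]) [0..<2 ^ m]
      = corner d c"
    by (intro nth_equalityI) (auto simp: nth_face_vector_all malcev_left malcev_right A)
  ultimately show ?thesis by (simp add: corner_rel_def)
qed

lemma corner_rel_trans: "(c, d) \<in> corner_rel \<Longrightarrow> (d, e) \<in> corner_rel \<Longrightarrow> (c, e) \<in> corner_rel"
proof -
  assume cd: "(c, d) \<in> corner_rel" and de: "(d, e) \<in> corner_rel"
  then have A: "c \<in> A" "d \<in> A" "e \<in> A" using corner_relD by auto
  have "map (\<lambda>j. q [corner c d ! j, replicate (2 ^ m) d ! j, corner d e ! j]) [0..<2 ^ m] \<in> D"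
    using cd de A by (intro D_malcev_closed D_replicate) (auto simp: corner_rel_def)
  moreover have "map (\<lambda>j. q [corner c d ! j, replicate (2 ^ m) d ! j, corner d e ! j]) [0..<2 ^ m]
      = corner c e"
    by (intro nth_equalityI) (auto simp: nth_face_vector_all malcev_left malcev_right A)
  ultimately show ?thesis by (simp add: corner_rel_def)
qed

lemma corner_rel_compatible:
  assumes "(l, f) \<in> F" and "length xs = l" "length ys = l"
    and "list_all2 (\<lambda>x y. (x, y) \<in> corner_rel) xs ys"
  shows "(f xs, f ys) \<in> corner_rel"
proof -
  define vs where "vs = map (\<lambda>p. corner (xs ! p) (ys ! p)) [0..<l]"
  have "map (\<lambda>j. f (map (\<lambda>v. v ! j) vs)) [0..<2 ^ m] \<in> D"
    using assms by (intro Delta.op[of l f]) (auto simp: vs_def corner_rel_def list_all2_conv_all_nth)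
  moreover have "map (\<lambda>v. v ! j) vs = (if j = mask m then ys else xs)" if "j < 2 ^ m" for j
    using assms(2,3) that by (intro nth_equalityI) (auto simp: vs_def nth_face_vector_all)
  then have "map (\<lambda>j. f (map (\<lambda>v. v ! j) vs)) [0..<2 ^ m] = corner (f xs) (f ys)"
    by (intro nth_equalityI) (auto simp: nth_face_vector_all)
  ultimately show ?thesis by (simp add: corner_rel_def)
qed

lemma congruence_corner_rel: "congruence A F corner_rel"
  unfolding congruence_def
proof (intro conjI)
  show "equiv A corner_rel"
    by (intro equivI refl_onI symI transI)
      (auto dest: corner_relD intro: corner_rel_refl corner_rel_sym corner_rel_trans)
qed (use corner_rel_compatible in blast)

lemma corner_rel_malcev:
  "(x1, y1) \<in> corner_rel \<Longrightarrow> (x2, y2) \<in> corner_rel \<Longrightarrow> (x3, y3) \<in> corner_rel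
    \<Longrightarrow> (q [x1, x2, x3], q [y1, y2, y3]) \<in> corner_rel"
  using term_op_compatible[OF congruence_corner_rel term_op] .

lemma face_vector_in_D:
  assumes "(c, d) \<in> corner_rel" and "I \<subseteq> {..<m}"
  shows "face_vector m I c d \<in> D"
proof -
  define \<rho> where "\<rho> k = nat_of_bits m (\<lambda>i. i \<notin> I \<or> bit k i)" for k :: nat
  have "map (\<lambda>k. corner c d ! \<rho> k) [0..<2 ^ m] \<in> D"
  proof (rule D_reindex)
    show "(\<forall>k<2 ^ m. bit (\<rho> k) i = bit k i) \<or> (\<exists>b. \<forall>k<2 ^ m. bit (\<rho> k) i = b)" if "i < m" for i
      using that by (cases "i \<in> I") (auto simp: \<rho>_def)
  qed (use assms(1) in \<open>simp_all add: \<rho>_def nat_of_bits_less corner_rel_def\<close>)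
  moreover have "map (\<lambda>k. corner c d ! \<rho> k) [0..<2 ^ m] = face_vector m I c d"
    using assms(2) by (intro nth_equalityI) (auto simp: \<rho>_def nth_face_vector nat_of_bits_less)
  ultimately show ?thesis by simp
qed

text \<open>One sweep step: \<open>q(z, x, f)\<close> with \<open>x = z\<^sub>N\<close> and \<open>f\<close> the face vector that is \<open>c\<close> above \<open>N\<close>
  and \<open>x\<close> elsewhere replaces \<open>z\<^sub>N\<close> by \<open>c\<close> and leaves all coordinates not above \<open>N\<close> untouched.\<close>

lemma sweep_step:
  assumes z: "z \<in> D" and N: "N < 2 ^ m" and zN: "(z ! N, c) \<in> corner_rel"
  obtains z' where "z' \<in> D"
    "\<And>k. k < 2 ^ m \<Longrightarrow>
      z' ! k = (if \<forall>i<m. bit N i \<longrightarrow> bit k i then q [z ! k, z ! N, c] else z ! k)"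
proof
  let ?x = "z ! N" and ?f = "face_vector m {i. i < m \<and> bit N i} (z ! N) c"
  have x: "?x \<in> A" using corner_relD[OF zN] by simp
  show "map (\<lambda>k. q [z ! k, replicate (2 ^ m) ?x ! k, ?f ! k]) [0..<2 ^ m] \<in> D"
    using z x zN by (intro D_malcev_closed D_replicate face_vector_in_D) auto
  fix k :: nat assume "k < 2 ^ m"
  then show "map (\<lambda>k. q [z ! k, replicate (2 ^ m) ?x ! k, ?f ! k]) [0..<2 ^ m] ! k
      = (if \<forall>i<m. bit N i \<longrightarrow> bit k i then q [z ! k, ?x, c] else z ! k)"
    using malcev_right[OF x D_nth_closed[OF z]] by (auto simp: nth_face_vector)
qed

text \<open>The invariant of the sweep: \<open>z\<close> has been cleared to \<open>c\<close> at all coordinates below \<open>N\<close>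
  except the top corner.\<close>
definition swept :: "'a \<Rightarrow> 'a \<Rightarrow> nat \<Rightarrow> 'a list \<Rightarrow> bool" where
  "swept c d N z \<longleftrightarrow> z \<in> D \<and> (\<forall>k<2 ^ m. k \<noteq> mask m \<longrightarrow> (z ! k, c) \<in> corner_rel)
     \<and> (\<forall>k<N. k \<noteq> mask m \<longrightarrow> z ! k = c) \<and> (z ! mask m, d) \<in> corner_rel"

lemma swept_Suc:
  assumes "swept c d N z" and N: "N < 2 ^ m" and c: "c \<in> A"
  shows "\<exists>z'. swept c d (Suc N) z'"
proof (cases "N = mask m")
  case True
  then show ?thesis using assms(1) by (auto simp: swept_def less_Suc_eq)
next
  case False
  have z: "z \<in> D" and zc: "\<forall>k<2 ^ m. k \<noteq> mask m \<longrightarrow> (z ! k, c) \<in> corner_rel"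
    and below: "\<forall>k<N. k \<noteq> mask m \<longrightarrow> z ! k = c" and zd: "(z ! mask m, d) \<in> corner_rel"
    using assms(1) by (auto simp: swept_def)
  have x: "(z ! N, c) \<in> corner_rel" using zc N False by simp
  obtain z' where z': "z' \<in> D" and z'_nth: "\<And>k. k < 2 ^ m \<Longrightarrow>
      z' ! k = (if \<forall>i<m. bit N i \<longrightarrow> bit k i then q [z ! k, z ! N, c] else z ! k)"
    using sweep_step[OF z N x] by blast
  have zA: "z ! k \<in> A" if "k < 2 ^ m" for k using D_nth_closed[OF z that] .
  have "(z' ! k, c) \<in> corner_rel" if "k < 2 ^ m" "k \<noteq> mask m" for k
  proof -
    have "(q [z ! k, z ! N, c], q [c, c, c]) \<in> corner_rel"
      using zc x that corner_rel_refl[OF c] by (intro corner_rel_malcev) auto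
    then show ?thesis using z'_nth zc that malcev_left[OF c c] by auto
  qed
  moreover have "z' ! k = c" if "k < Suc N" "k \<noteq> mask m" for k
  proof (cases "k = N")
    case True
    then show ?thesis using z'_nth N malcev_left[OF zA[OF N] c] by simp
  next
    case False
    with that have "k < N" by simp
    then have "\<not> (\<forall>i<m. bit N i \<longrightarrow> bit k i)" using le_if_bits_subset[OF N] by (meson leD)
    moreover have "k < 2 ^ m" using \<open>k < N\<close> N by simp
    ultimately show ?thesis using z'_nth \<open>k < N\<close> below that by auto
  qed
  moreover have "(z' ! mask m, d) \<in> corner_rel"
  proof -
    have top: "mask m < (2::nat) ^ m" by (rule mask_nat_less_exp)
    have "(q [z ! mask m, z ! N, c], q [z ! mask m, c, c]) \<in> corner_rel"
      using x zA[OF top] c by (intro corner_rel_malcev corner_rel_refl) auto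
    then have "(z' ! mask m, z ! mask m) \<in> corner_rel"
      using z'_nth[OF top] malcev_right[OF c zA[OF top]] by (simp add: bit_mask_iff)
    then show ?thesis using zd corner_rel_trans by blast
  qed
  ultimately show ?thesis using z' by (auto simp: swept_def)
qed

lemma corner_rel_by_sweeping:
  assumes "z \<in> D" and c: "c \<in> A"
    and "\<forall>k<2 ^ m. k \<noteq> mask m \<longrightarrow> (z ! k, c) \<in> corner_rel"
    and top: "(z ! mask m, d) \<in> corner_rel"
  shows "(c, d) \<in> corner_rel"
proof -
  have "\<exists>z. swept c d N z" if "N \<le> 2 ^ m" for N
    using that
  proof (induction N)
    case 0
    then show ?case using assms by (auto simp: swept_def)
  next
    case (Suc N)
    then show ?case using swept_Suc c by auto
  qed
  then obtain z where "swept c d (2 ^ m) z" by blast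
  then have z: "z \<in> D" and zc: "\<forall>k<2 ^ m. k \<noteq> mask m \<longrightarrow> z ! k = c"
    and zd: "(z ! mask m, d) \<in> corner_rel"
    by (auto simp: swept_def)
  have "z = corner c (z ! mask m)"
    using zc length_Delta[OF z] by (intro nth_equalityI) (auto simp: nth_face_vector_all)
  then have "(c, z ! mask m) \<in> corner_rel" using z by (simp add: corner_rel_def)
  then show ?thesis using zd corner_rel_trans by blast
qed

lemma corner_rel_last_edge:
  assumes u: "u \<in> D"
    and edges: "\<And>k. k < 2 ^ m \<Longrightarrow> \<not> bit k (m - 1) \<Longrightarrow> k \<noteq> mask (m - 1)
      \<Longrightarrow> (u ! k, u ! set_bit (m - 1) k) \<in> corner_rel"
  shows "(u ! mask (m - 1), u ! mask m) \<in> corner_rel"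
proof -
  let ?h = "m - 1" and ?c = "u ! mask (m - 1)" and ?d = "u ! mask m"
  have m: "Suc ?h = m" using pos by simp
  have uA: "u ! k \<in> A" if "k < 2 ^ m" for k using D_nth_closed[OF u that] .
  have "mask ?h < (2::nat) ^ m" by (rule less_exp_if_bits_below) (simp add: bit_mask_iff)
  then have c: "?c \<in> A" by (rule uA)
  text \<open>\<open>q(u, u', c)\<close>, with \<open>u'\<close> the bottom face of \<open>u\<close> copied upwards, is \<open>c\<close> on the bottom face,
    \<open>corner_rel\<close>-related to \<open>c\<close> on the top face by the hypothesis, and \<open>d\<close> at the top corner.\<close>
  let ?v = "map (\<lambda>k. u ! unset_bit ?h k) [0..<2 ^ m]"
  have "?v \<in> D"
    using u by (intro D_reindex) (auto simp: unset_bit_less_exp bit_unset_bit_iff)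
  then have z: "map (\<lambda>k. q [u ! k, ?v ! k, replicate (2 ^ m) ?c ! k]) [0..<2 ^ m] \<in> D"
    (is "?z \<in> D")
    using u c by (intro D_malcev_closed D_replicate) auto
  have z_nth: "?z ! k = q [u ! k, u ! unset_bit ?h k, ?c]" if "k < 2 ^ m" for k
    using that by simp
  have "(?z ! k, ?c) \<in> corner_rel" if k: "k < 2 ^ m" "k \<noteq> mask m" for k
  proof (cases "bit k ?h")
    case False
    then have "unset_bit ?h k = k" by (intro bit_eqI) (auto simp: bit_unset_bit_iff)
    then show ?thesis using z_nth[OF k(1)] malcev_left[OF uA[OF k(1)] c] corner_rel_refl[OF c] by simp
  next
    case True
    let ?k' = "unset_bit ?h k"
    have k': "?k' < 2 ^ m" using k(1) by (rule unset_bit_less_exp)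
    have "set_bit ?h ?k' = k" using True by (rule set_bit_unset_bit)
    moreover have "?k' \<noteq> mask ?h"
    proof
      assume "?k' = mask ?h"
      then have "set_bit ?h ?k' = mask m" using set_bit_mask[of ?h] m by simp
      then show False using \<open>set_bit ?h ?k' = k\<close> k(2) by simp
    qed
    ultimately have "(u ! ?k', u ! k) \<in> corner_rel"
      using edges[OF k'] by (simp add: bit_unset_bit_iff)
    then have "(q [u ! k, u ! ?k', ?c], q [u ! ?k', u ! ?k', ?c]) \<in> corner_rel"
      using corner_rel_sym corner_rel_refl[OF c] corner_rel_refl[OF uA[OF k']] corner_rel_malcev
      by blast
    then show ?thesis using z_nth[OF k(1)] malcev_left[OF uA[OF k'] c] by simp
  qed
  moreover have "?z ! mask m = ?d"
    using z_nth[OF mask_nat_less_exp] unset_bit_mask_Suc[of ?h] m malcev_right[OF c uA] 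
    by (simp add: mask_nat_less_exp)
  then have "(?z ! mask m, ?d) \<in> corner_rel" using corner_rel_refl uA mask_nat_less_exp by simp
  ultimately show ?thesis by (intro corner_rel_by_sweeping[OF z c]) simp_all
qed

lemma corner_rel_centralizes: "centralizes A F (map \<beta> [0..<m]) corner_rel"
  unfolding centralizes_def length_map length_upt diff_zero
proof (intro allI impI, elim conjE)
  fix as bs :: "'a list list" and t
  assume la: "length as = m" and lb: "length bs = m"
    and li: "\<forall>i<m. length (as ! i) = length (bs ! i) \<and> as ! i \<noteq> bs ! i \<and>
        list_all2 (\<lambda>x y. (x, y) \<in> map \<beta> [0..<m] ! i) (as ! i) (bs ! i)"
    and t: "t \<in> termops F (length (concat as))"
    and H: "\<forall>e. (\<exists>i<m - 1. \<not> e i) \<longrightarrow>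
       (t (concat (pick (m - 1) e as bs @ [as ! (m - 1)])),
        t (concat (pick (m - 1) e as bs @ [bs ! (m - 1)]))) \<in> corner_rel"
  obtain h where m: "m = Suc h" using pos gr0_implies_Suc by blast
  then have hm: "m - 1 = h" by simp
  let ?u = "cube_eval m t as bs"
  have "related_tuples m \<beta> as bs" using la lb li by (simp add: related_tuples_def)
  then have u: "?u \<in> D" using t by (rule cube_eval_in_Delta)
  have "(?u ! mask h, ?u ! mask m) \<in> corner_rel"
  proof (rule corner_rel_last_edge[OF u, unfolded hm])
    fix k :: nat assume k: "k < 2 ^ m" "\<not> bit k h" "k \<noteq> mask h"
    have "\<exists>i<h. \<not> bit k i"
    proof (rule ccontr)
      assume "\<not> (\<exists>i<h. \<not> bit k i)"
      then have "bit k n \<longleftrightarrow> n < h" for n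
        using k(2) bit_less_exp_imp_less[OF k(1), of n] m by (cases "n = h") auto
      then have "k = mask h" by (intro bit_eqI) (simp add: bit_mask_iff)
      with k(3) show False ..
    qed
    moreover have "pick m (bit k) as bs = pick h (bit k) as bs @ [as ! h]"
      using k(2) m by (metis pick_Suc)
    moreover have "pick m (bit (set_bit h k)) as bs = pick h (bit k) as bs @ [bs ! h]"
      unfolding m by (simp add: pick_Suc bit_set_bit_iff cong: pick_cong)
    moreover have "set_bit h k < 2 ^ m" using k(1) m by (intro set_bit_less_exp) simp_all
    ultimately show "(?u ! k, ?u ! set_bit h k) \<in> corner_rel"
      using H k(1) unfolding hm by (simp add: nth_cube_eval)
  qed
  moreover have "?u ! mask h = t (concat (take h bs @ [as ! h]))"
  proof -
    have "pick m (bit (mask h :: nat)) as bs = take h bs @ [as ! h]"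
      using pick_take[of h bs "bit (mask h :: nat)" as] lb unfolding m
      by (simp add: pick_Suc bit_mask_iff)
    moreover have "mask h < (2::nat) ^ m" by (rule less_exp_if_bits_below) (simp add: bit_mask_iff m)
    ultimately show ?thesis by (simp add: nth_cube_eval)
  qed
  moreover have "?u ! mask m = t (concat bs)"
    using lb by (simp add: nth_cube_eval mask_nat_less_exp bit_mask_iff pick_True cong: pick_cong)
  ultimately show "(t (concat (take (m - 1) bs @ [as ! (m - 1)])), t (concat bs)) \<in> corner_rel"
    unfolding hm by simp
qed

lemma corner_rel_obtain_term:
  assumes "(c, d) \<in> corner_rel"
  obtains as bs t where "related_tuples m \<beta> as bs" "t \<in> termops F (length (concat as))"
    "\<And>P. t (concat (pick m P as bs)) = (if \<forall>i<m. P i then d else c)"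
proof -
  obtain as bs t where "related_tuples m \<beta> as bs" "t \<in> termops F (length (concat as))"
    and eq: "corner c d = cube_eval m t as bs"
    using Delta_obtain_cube_eval[of "corner c d" A F m \<beta>] assms cong by (auto simp: corner_rel_def)
  moreover have "t (concat (pick m P as bs)) = (if \<forall>i<m. P i then d else c)" for P
    using nth_cube_eval_nat_of_bits[of m t as bs P, folded eq]
    by (simp add: nth_face_vector_all nat_of_bits_less eq_mask_iff[OF nat_of_bits_less])
  ultimately show ?thesis using that by blast
qed

lemma corner_rel_minimal:
  assumes \<gamma>: "congruence A F \<gamma>" and C: "centralizes A F (map \<beta> [0..<m]) \<gamma>"
  shows "corner_rel \<subseteq> \<gamma>"
proof safe
  fix c d assume cd: "(c, d) \<in> corner_rel"
  then have c: "c \<in> A" using corner_relD by blast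
  obtain as bs t where rel: "related_tuples m \<beta> as bs" and t: "t \<in> termops F (length (concat as))"
    and val: "\<And>P. t (concat (pick m P as bs)) = (if \<forall>i<m. P i then d else c)"
    using corner_rel_obtain_term[OF cd] by blast
  obtain h where m: "m = Suc h" using pos gr0_implies_Suc by blast
  let ?\<beta>s = "map \<beta> [0..<m]"
  have h: "length ?\<beta>s - 1 = h" using m by simp
  have "(t (concat (take (length ?\<beta>s - 1) bs @ [as ! (length ?\<beta>s - 1)])), t (concat bs)) \<in> \<gamma>"
  proof (rule centralizesD[OF alg _ C])
    show "equiv A \<gamma>" using \<gamma> by (simp add: congruence_def)
    show "\<forall>i<length ?\<beta>s. ?\<beta>s ! i \<subseteq> A \<times> A" using rel_subset by simp
    show "length as = length ?\<beta>s" "length bs = length ?\<beta>s"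
      "\<forall>i<length ?\<beta>s. length (as ! i) = length (bs ! i) \<and>
         list_all2 (\<lambda>x y. (x, y) \<in> ?\<beta>s ! i) (as ! i) (bs ! i)"
      using rel by (auto simp: related_tuples_def list_all2_lengthD)
    show "t \<in> termops F (length (concat as))" by (rule t)
    show "\<forall>e. (\<exists>i<length ?\<beta>s - 1. \<not> e i) \<longrightarrow>
        (t (concat (pick (length ?\<beta>s - 1) e as bs @ [as ! (length ?\<beta>s - 1)])),
         t (concat (pick (length ?\<beta>s - 1) e as bs @ [bs ! (length ?\<beta>s - 1)]))) \<in> \<gamma>"
      unfolding h
    proof (intro allI impI)
      fix e assume "\<exists>i<h. \<not> e i"
      then have "t (concat (pick h e as bs @ [if b then bs ! h else as ! h])) = c" for b
        using val[of "e(h := b)"] unfolding m pick_Suc_fun_upd by auto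
      from this[of False] this[of True]
      show "(t (concat (pick h e as bs @ [as ! h])), t (concat (pick h e as bs @ [bs ! h]))) \<in> \<gamma>"
        using congruence_refl[OF \<gamma> c] by simp
    qed
  qed
  moreover have "t (concat (take h bs @ [as ! h])) = c"
  proof -
    have "pick m (\<lambda>i. i \<noteq> h) as bs = take h bs @ [as ! h]"
      using pick_take[of h bs "\<lambda>i. i \<noteq> h" as] rel unfolding m
      by (simp add: pick_Suc related_tuples_def)
    then show ?thesis using val[of "\<lambda>i. i \<noteq> h"] m by auto
  qed
  moreover have "t (concat bs) = d"
    using val[of "\<lambda>_. True"] rel by (simp add: pick_True related_tuples_def)
  ultimately show "(c, d) \<in> \<gamma>" unfolding h by simp
qed

theorem commutator_eq_corner_rel: "commutator A F (map \<beta> [0..<m]) = corner_rel"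
  unfolding commutator_def
  using congruence_corner_rel corner_rel_centralizes corner_rel_minimal by blast

end

text \<open>Restricting to the directions listed in \<open>s\<close>: corner vectors of \<open>\<Delta>(\<alpha>\<^sub>s\<^sub>!\<^sub>0,\<alpha>\<^sub>s\<^sub>!\<^sub>1,\<dots>)\<close>
  correspond to face vectors of \<open>\<Delta>(\<alpha>\<^sub>0,\<dots>,\<alpha>\<^sub>n\<^sub>-\<^sub>1)\<close> over \<open>set s\<close>, by copying bit \<open>j\<close> to bit \<open>s ! j\<close>
  and back.\<close>

lemma face_vector_in_Delta_if_corner:
  assumes cong: "\<forall>i<n. congruence A F (\<alpha> i)" and s: "set s \<subseteq> {..<n}" "s \<noteq> []"
    and corner: "face_vector (length s) {..<length s} c d \<in> Delta A F (length s) (\<lambda>j. \<alpha> (s ! j))"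
  shows "face_vector n (set s) c d \<in> Delta A F n \<alpha>"
proof -
  let ?m = "length s"
  define \<rho> where "\<rho> k = nat_of_bits ?m (\<lambda>j. bit k (s ! j))" for k :: nat
  have s_lt: "s ! j < n" if "j < ?m" for j using s(1) nth_mem[OF that] by auto
  have n: "0 < n" using s by (cases s) auto
  have sub: "\<forall>j<?m. \<alpha> (s ! j) \<subseteq> A \<times> A" using cong s_lt congruence_subset by metis
  have refl: "(a, a) \<in> \<alpha> 0" if "a \<in> A" for a using cong n that congruence_refl by metis
  have "map (\<lambda>k. face_vector ?m {..<?m} c d ! \<rho> k) [0..<2 ^ n] \<in> Delta A F n \<alpha>"
  proof (rule Delta_reindex[of n \<rho> ?m "\<lambda>j. \<alpha> (s ! j)" \<alpha> A "face_vector ?m {..<?m} c d" F,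
        OF _ _ sub n refl corner])
    fix j assume "j < ?m"
    then show "(\<exists>i<n. \<alpha> (s ! j) \<subseteq> \<alpha> i \<and> (\<forall>k<2 ^ n. bit (\<rho> k) j = bit k i))
        \<or> (\<exists>b. \<forall>k<2 ^ n. bit (\<rho> k) j = b)"
      using s_lt by (intro disjI1 exI[of _ "s ! j"]) (simp add: \<rho>_def)
  qed (simp add: \<rho>_def nat_of_bits_less)
  moreover have "map (\<lambda>k. face_vector ?m {..<?m} c d ! \<rho> k) [0..<2 ^ n] = face_vector n (set s) c d"
    by (intro nth_equalityI) (auto simp: \<rho>_def nat_of_bits_less nth_face_vector all_set_conv_all_nth)
  ultimately show ?thesis by simp
qed

lemma corner_in_Delta_if_face_vector:
  assumes cong: "\<forall>i<n. congruence A F (\<alpha> i)" and s: "set s \<subseteq> {..<n}" "s \<noteq> []" "distinct s"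
    and face: "face_vector n (set s) c d \<in> Delta A F n \<alpha>"
  shows "face_vector (length s) {..<length s} c d \<in> Delta A F (length s) (\<lambda>j. \<alpha> (s ! j))"
proof -
  let ?m = "length s"
  define \<rho> where "\<rho> k = nat_of_bits n (\<lambda>i. \<exists>j<?m. s ! j = i \<and> bit k j)" for k :: nat
  have s_lt: "s ! j < n" if "j < ?m" for j using s(1) nth_mem[OF that] by auto
  have bit_\<rho>: "bit (\<rho> k) (s ! j) \<longleftrightarrow> bit k j" if "j < ?m" for j k
    using that s_lt s(3) by (auto simp: \<rho>_def nth_eq_iff_index_eq)
  have \<rho>_less: "\<rho> k < 2 ^ n" for k by (simp add: \<rho>_def nat_of_bits_less)
  have m: "0 < ?m" using s(2) by simp
  have sub: "\<forall>i<n. \<alpha> i \<subseteq> A \<times> A" using cong congruence_subset by metis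
  have refl: "(a, a) \<in> \<alpha> (s ! 0)" if "a \<in> A" for a using cong s_lt[OF m] that congruence_refl by metis
  have "map (\<lambda>k. face_vector n (set s) c d ! \<rho> k) [0..<2 ^ ?m] \<in> Delta A F ?m (\<lambda>j. \<alpha> (s ! j))"
  proof (rule Delta_reindex[of ?m \<rho> n \<alpha> "\<lambda>j. \<alpha> (s ! j)" A "face_vector n (set s) c d" F,
        OF _ _ sub m refl face])
    fix i assume "i < n"
    show "(\<exists>j<?m. \<alpha> i \<subseteq> \<alpha> (s ! j) \<and> (\<forall>k<2 ^ ?m. bit (\<rho> k) i = bit k j))
        \<or> (\<exists>b. \<forall>k<2 ^ ?m. bit (\<rho> k) i = b)"
    proof (cases "\<exists>j<?m. s ! j = i")
      case True
      then obtain j where "j < ?m" "s ! j = i" by blast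
      then show ?thesis using bit_\<rho> by (intro disjI1 exI[of _ j]) auto
    next
      case False
      then show ?thesis by (intro disjI2 exI[of _ False]) (auto simp: \<rho>_def)
    qed
  qed (simp add: \<rho>_less)
  moreover have "map (\<lambda>k. face_vector n (set s) c d ! \<rho> k) [0..<2 ^ ?m] = face_vector ?m {..<?m} c d"
    by (intro nth_equalityI) (auto simp: \<rho>_less nth_face_vector bit_\<rho> all_set_conv_all_nth)
  ultimately show ?thesis by simp
qed

theorem commutator_idx_eq_face_vectors:
  assumes alg: "is_algebra A F" and malcev: "is_malcev A F q"
    and cong_\<alpha>: "\<forall>i<n. congruence A F (\<alpha> i)" and I: "I \<subseteq> {..<n}" "I \<noteq> {}"
  shows "commutator_idx A F \<alpha> I = {(c, d). face_vector n I c d \<in> Delta A F n \<alpha>}"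
proof -
  define s where "s = sorted_list_of_set I"
  have fin: "finite I" using I(1) finite_subset by blast
  have s: "set s = I" "distinct s" "s \<noteq> []" using fin I(2) by (simp_all add: s_def)
  interpret malcev_cube A F q "length s" "\<lambda>j. \<alpha> (s ! j)"
    using alg malcev s I(1) cong_\<alpha> nth_mem by unfold_locales auto
  have "map \<alpha> s = map (\<lambda>j. \<alpha> (s ! j)) [0..<length s]" by (intro nth_equalityI) simp_all
  then have "commutator_idx A F \<alpha> I = corner_rel"
    by (simp add: commutator_idx_def s_def[symmetric] commutator_eq_corner_rel)
  also have "\<dots> = {(c, d). face_vector n I c d \<in> Delta A F n \<alpha>}"
    using face_vector_in_Delta_if_corner[OF cong_\<alpha>] corner_in_Delta_if_face_vector[OF cong_\<alpha>]
      s I(1) by (auto simp: corner_rel_def)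
  finally show ?thesis .
qed

section \<open>Face vectors determine \<open>\<Delta>\<close>\<close>

context malcev_cube
begin

text \<open>If \<open>u, w \<in> \<Delta>\<close> agree below \<open>N\<close>, then \<open>q(u\<rho>, w\<rho>, c)\<close> with \<open>\<rho> k = k AND N\<close> and \<open>c = w\<^sub>N\<close> is the
  face vector that is \<open>u\<^sub>N\<close> above \<open>N\<close> and \<open>c\<close> elsewhere.\<close>

lemma face_vector_of_agreeing:
  assumes u: "u \<in> D" and w: "w \<in> D" and N: "N < 2 ^ m" and agree: "\<forall>k<N. w ! k = u ! k"
  shows "face_vector m {i. i < m \<and> bit N i} (w ! N) (u ! N) \<in> D"
proof -
  define \<rho> where "\<rho> k = nat_of_bits m (\<lambda>i. bit k i \<and> bit N i)" for k :: nat
  have \<rho>: "\<rho> k < 2 ^ m" for k by (simp add: \<rho>_def nat_of_bits_less)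
  have col: "map (\<lambda>k. v ! \<rho> k) [0..<2 ^ m] \<in> D" if "v \<in> D" for v
    using that by (intro D_reindex) (auto simp: \<rho>_def nat_of_bits_less)
  have \<rho>_eq_N: "\<rho> k = N \<longleftrightarrow> (\<forall>i<m. bit N i \<longrightarrow> bit k i)" for k
    unfolding \<rho>_def eq_commute[of _ N] eq_nat_of_bits_iff[OF N] by auto
  have \<rho>_le: "\<rho> k \<le> N" for k
    using le_if_bits_subset[OF \<rho>] by (simp add: \<rho>_def)
  let ?c = "w ! N"
  have c: "?c \<in> A" using D_nth_closed[OF w N] .
  let ?z = "map (\<lambda>j. q [map (\<lambda>k. u ! \<rho> k) [0..<2 ^ m] ! j, map (\<lambda>k. w ! \<rho> k) [0..<2 ^ m] ! j,
      replicate (2 ^ m) ?c ! j]) [0..<2 ^ m]"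
  have "?z \<in> D" using col[OF u] col[OF w] c by (intro D_malcev_closed D_replicate)
  moreover have "?z = face_vector m {i. i < m \<and> bit N i} ?c (u ! N)"
  proof (rule nth_equalityI)
    fix k assume "k < length ?z"
    then have k: "k < 2 ^ m" by simp
    show "?z ! k = face_vector m {i. i < m \<and> bit N i} ?c (u ! N) ! k"
    proof (cases "\<rho> k = N")
      case True
      then show ?thesis using k \<rho>_eq_N[of k] malcev_right[OF c D_nth_closed[OF u N]]
        by (simp add: nth_face_vector)
    next
      case False
      then have "\<rho> k < N" using \<rho>_le[of k] by simp
      then have "w ! \<rho> k = u ! \<rho> k" using agree by simp
      then show ?thesis using k \<rho>_eq_N[of k] False malcev_left[OF D_nth_closed[OF u \<rho>] c]
        by (auto simp: nth_face_vector)
    qed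
  qed simp
  ultimately show ?thesis by simp
qed

end

locale malcev_cube_pair = F: malcev_cube A F q n \<alpha> + G: malcev_cube A G q n \<alpha>
  for A :: "'a set" and F G :: "'a ops" and q :: "'a list \<Rightarrow> 'a" and n :: nat
    and \<alpha> :: "nat \<Rightarrow> ('a \<times> 'a) set"
begin

lemma rebuild_step:
  assumes faces: "\<And>I c d. I \<subseteq> {..<n} \<Longrightarrow> I \<noteq> {} \<Longrightarrow> face_vector n I c d \<in> Delta A F n \<alpha>
      \<Longrightarrow> face_vector n I c d \<in> Delta A G n \<alpha>"
    and u: "u \<in> Delta A F n \<alpha>" and wF: "w \<in> Delta A F n \<alpha>" and wG: "w \<in> Delta A G n \<alpha>"
    and agree: "\<forall>k<N. w ! k = u ! k" and N: "N < 2 ^ n" "N \<noteq> 0"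
  shows "\<exists>w'. w' \<in> Delta A F n \<alpha> \<and> w' \<in> Delta A G n \<alpha> \<and> (\<forall>k<Suc N. w' ! k = u ! k)"
proof -
  let ?I = "{i. i < n \<and> bit N i}" and ?c = "w ! N"
  have c: "?c \<in> A" using F.D_nth_closed[OF wF N(1)] .
  have uA: "u ! k \<in> A" if "k < 2 ^ n" for k using F.D_nth_closed[OF u that] .
  have "?I \<noteq> {}" using ex_bit_if_nonzero[OF N] by auto
  then have face: "face_vector n ?I ?c (u ! N) \<in> Delta A G n \<alpha>"
    using faces[of ?I] F.face_vector_of_agreeing[OF u wF N(1) agree] by auto
  let ?w = "map (\<lambda>j. q [w ! j, replicate (2 ^ n) ?c ! j, face_vector n ?I ?c (u ! N) ! j]) [0..<2 ^ n]"
  have "?w \<in> Delta A F n \<alpha>"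
    using wF c F.face_vector_of_agreeing[OF u wF N(1) agree] by (intro F.D_malcev_closed F.D_replicate)
  moreover have "?w \<in> Delta A G n \<alpha>"
    using wG c face by (intro G.D_malcev_closed G.D_replicate)
  moreover have "?w ! k = u ! k" if "k < Suc N" for k
  proof (cases "k = N")
    case True
    then show ?thesis using N F.malcev_left[OF c uA[OF N(1)]] by (simp add: nth_face_vector)
  next
    case False
    with that have "k < N" by simp
    then have "\<not> (\<forall>i\<in>?I. bit k i)" using le_if_bits_subset[OF N(1), of k] by auto
    moreover have "k < 2 ^ n" using \<open>k < N\<close> N by simp
    ultimately show ?thesis
      using \<open>k < N\<close> agree F.malcev_right[OF c uA] by (auto simp: nth_face_vector)
  qed
  ultimately show ?thesis by blast
qed

lemma Delta_subset_if_face_vectors_subset: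
  assumes faces: "\<And>I c d. I \<subseteq> {..<n} \<Longrightarrow> I \<noteq> {} \<Longrightarrow> face_vector n I c d \<in> Delta A F n \<alpha>
      \<Longrightarrow> face_vector n I c d \<in> Delta A G n \<alpha>"
  shows "Delta A F n \<alpha> \<subseteq> Delta A G n \<alpha>"
proof
  fix u assume u: "u \<in> Delta A F n \<alpha>"
  let ?u\<^sub>0 = "replicate (2 ^ n) (u ! 0)"
  have start: "?u\<^sub>0 \<in> Delta A F n \<alpha>" "?u\<^sub>0 \<in> Delta A G n \<alpha>"
    using F.D_replicate G.D_replicate F.D_nth_closed[OF u, of 0] by simp_all
  have "\<exists>w. w \<in> Delta A F n \<alpha> \<and> w \<in> Delta A G n \<alpha> \<and> (\<forall>k<N. w ! k = u ! k)" if "N \<le> 2 ^ n" for N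
    using that
  proof (induction N)
    case 0
    then show ?case using start by blast
  next
    case (Suc N)
    then obtain w where "w \<in> Delta A F n \<alpha>" "w \<in> Delta A G n \<alpha>" "\<forall>k<N. w ! k = u ! k"
      and N: "N < 2 ^ n" by auto
    then show ?case
      using rebuild_step[OF faces u] start by (cases "N = 0") (auto intro!: exI[of _ ?u\<^sub>0])
  qed
  then obtain w where "w \<in> Delta A G n \<alpha>" "\<forall>k<2 ^ n. w ! k = u ! k" by blast
  moreover from this have "w = u"
    using length_Delta[OF u] length_Delta[of w] by (intro nth_equalityI) auto
  ultimately show "u \<in> Delta A G n \<alpha>" by simp
qed

end

theorem mainTheorem10:
  fixes A :: "'a set" and F G :: "'a ops" and q :: "'a list \<Rightarrow> 'a"
    and n :: nat and \<alpha> :: "nat \<Rightarrow> ('a \<times> 'a) set"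
  assumes "is_algebra A F" and "is_algebra A G"
    and "is_malcev A F q" and "is_malcev A G q"
    and "n \<ge> 1"
    and "\<forall>i < n. congruence A F (\<alpha> i) \<and> congruence A G (\<alpha> i)"
  shows "(\<forall>I. I \<subseteq> {..<n} \<and> I \<noteq> {} \<longrightarrow> commutator_idx A F \<alpha> I = commutator_idx A G \<alpha> I)
         \<longleftrightarrow> Delta A F n \<alpha> = Delta A G n \<alpha>"
proof -
  interpret FG: malcev_cube_pair A F G q n \<alpha>
    using assms by (simp add: malcev_cube_pair_def malcev_cube_def)
  interpret GF: malcev_cube_pair A G F q n \<alpha>
    using assms by (simp add: malcev_cube_pair_def malcev_cube_def)
  have faces_F: "commutator_idx A F \<alpha> I = {(c, d). face_vector n I c d \<in> Delta A F n \<alpha>}"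
    and faces_G: "commutator_idx A G \<alpha> I = {(c, d). face_vector n I c d \<in> Delta A G n \<alpha>}"
    if "I \<subseteq> {..<n}" "I \<noteq> {}" for I
    using commutator_idx_eq_face_vectors[OF FG.F.alg FG.F.malcev FG.F.cong that]
      commutator_idx_eq_face_vectors[OF FG.G.alg FG.G.malcev FG.G.cong that] by simp_all
  show ?thesis
  proof
    assume same: "\<forall>I. I \<subseteq> {..<n} \<and> I \<noteq> {} \<longrightarrow> commutator_idx A F \<alpha> I = commutator_idx A G \<alpha> I"
    have "face_vector n I c d \<in> Delta A F n \<alpha> \<longleftrightarrow> face_vector n I c d \<in> Delta A G n \<alpha>"
      if "I \<subseteq> {..<n}" "I \<noteq> {}" for I c d
    proof -
      have "(c, d) \<in> commutator_idx A F \<alpha> I \<longleftrightarrow> (c, d) \<in> commutator_idx A G \<alpha> I" using same that by simp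
      then show ?thesis using faces_F[OF that] faces_G[OF that] by simp
    qed
    then show "Delta A F n \<alpha> = Delta A G n \<alpha>"
      using FG.Delta_subset_if_face_vectors_subset GF.Delta_subset_if_face_vectors_subset
      by (simp add: equalityI)
  qed (simp add: faces_F faces_G)
qed

end
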